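(* Let $\Omega=\{a,b,c,d\}$ and $\Sigma=2^\Omega$. Let $\mu_1,\mu_2,\mu_3,\mu_4$ be the probability measures on $\Sigma$ determined by $\mu_1(a)=\mu_1(b)=\mu_1(c)=\mu_1(d)=\tfrac14$; $\mu_2(a)=0,\ \mu_2(b)=\tfrac18,\ \mu_2(c)=\tfrac38,\ \mu_2(d)=\tfrac12$; $\mu_3(a)=\tfrac18,\ \mu_3(b)=\tfrac38,\ \mu_3(c)=0,\ \mu_3(d)=\tfrac12$; $\mu_4(a)=\tfrac38,\ \mu_4(b)=0,\ \mu_4(c)=\tfrac18,\ \mu_4(d)=\tfrac12$. Let $\mathcal{P}=\{\mu_1,\mu_2,\mu_3,\mu_4\}$ and $\mathcal{P}^*(X)=\max_{i}\mu_i(X)$. For $\epsilon>0$ define $\upsilon_\epsilon:\Sigma\to[0,1]$ by $\upsilon_\epsilon(\{a,b,c\})=\mathcal{P}^*(\{a,b,c\})+\epsilon$ and $\upsilon_\epsilon(X)=\mathcal{P}^*(X)$ for $X\ne\{a,b,c\}$. Then for every $0<\epsilon<\tfrac18$: (i) $\upsilon_\epsilon$ satisfies property (6), i.e. for all disjoint $A,B\subseteq\Omega$, $\upsilon_\epsilon(A)+(1-\upsilon_\epsilon(\Omega\setminus B))\le \upsilon_\epsilon(A\cup B)\le \upsilon_\epsilon(A)+\upsilon_\epsilon(B)$; and (ii) there is no set $\mathcal{P}'$ of probability measures on $\Sigma$ such that $\upsilon_\epsilon(X)=\sup\{\mu(X):\mu\in\mathcal{P}'\}$ for all $X\in\Si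gma$.
   Context: Probability measures are finitely additive functions $\mu:\Sigma\to[0,1]$ with $\mu(\emptyset)=0$, $\mu(\Omega)=1$. *)

theory Defs
  imports Complex_Main
begin

datatype omega = a | b | c | d

lemma UNIV_omega: "(UNIV :: omega set) = {a, b, c, d}"
  by (auto intro: omega.exhaust)

instance omega :: finite
  by standard (simp add: UNIV_omega)

definition prob_measure :: "(omega set \<Rightarrow> real) \<Rightarrow> bool" where
  "prob_measure \<mu> \<longleftrightarrow>
     (\<forall>X. 0 \<le> \<mu> X \<and> \<mu> X \<le> 1) \<and> \<mu> {} = 0 \<and> \<mu> UNIV = 1 \<and>
     (\<forall>A B. A \<inter> B = {} \<longrightarrow> \<mu> (A \<union> B) = \<mu> A + \<mu> B)"

definition pt_measure :: "(omega \<Rightarrow> real) \<Rightarrow> omega set \<Rightarrow> real" where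
  "pt_measure p X = (\<Sum>x\<in>X. p x)"

definition p1 :: "omega \<Rightarrow> real" where
  "p1 x = 1/4"
definition p2 :: "omega \<Rightarrow> real" where
  "p2 x = (case x of a \<Rightarrow> 0 | b \<Rightarrow> 1/8 | c \<Rightarrow> 3/8 | d \<Rightarrow> 1/2)"
definition p3 :: "omega \<Rightarrow> real" where
  "p3 x = (case x of a \<Rightarrow> 1/8 | b \<Rightarrow> 3/8 | c \<Rightarrow> 0 | d \<Rightarrow> 1/2)"
definition p4 :: "omega \<Rightarrow> real" where
  "p4 x = (case x of a \<Rightarrow> 3/8 | b \<Rightarrow> 0 | c \<Rightarrow> 1/8 | d \<Rightarrow> 1/2)"

definition mu1 :: "omega set \<Rightarrow> real" where "mu1 = pt_measure p1"
definition mu2 :: "omega set \<Rightarrow> real" where "mu2 = pt_measure p2"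
definition mu3 :: "omega set \<Rightarrow> real" where "mu3 = pt_measure p3"
definition mu4 :: "omega set \<Rightarrow> real" where "mu4 = pt_measure p4"

definition Pcal :: "(omega set \<Rightarrow> real) set" where
  "Pcal = {mu1, mu2, mu3, mu4}"

definition Pstar :: "omega set \<Rightarrow> real" where
  "Pstar X = Max ((\<lambda>\<mu>. \<mu> X) ` Pcal)"

definition upsilon :: "real \<Rightarrow> omega set \<Rightarrow> real" where
  "upsilon \<epsilon> X = (if X = {a, b, c} then Pstar X + \<epsilon> else Pstar X)"

definition property6 :: "(omega set \<Rightarrow> real) \<Rightarrow> bool" where
  "property6 \<upsilon> \<longleftrightarrow>
     (\<forall>A B. A \<inter> B = {} \<longrightarrow>
        \<upsilon> A + (1 - \<upsilon> (UNIV - B)) \<le> \<upsilon> (A \<union> B) \<and> \<upsilon> (A \<union> B) \<le> \<upsilon> A + \<upsilon> B)"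

end

theory Submission
  imports Defs
begin

(* P^* is the upper envelope of finitely many probability measures, and every such envelope
  satisfies (6).  Raising it by \<epsilon> on the coatom {a, b, c} keeps (6) as long as subadditivity
  has slack \<epsilon> on every split of {a, b, c} into two nonempty parts; here that slack is
  7/8 - 3/4 = 1/8.  Conversely, each probability measure satisfies
  2 \<mu>{a, b, c} = \<mu>{a, b} + \<mu>{b, c} + \<mu>{a, c}, so any supremum of probability measures has
  2 v{a, b, c} \<le> v{a, b} + v{b, c} + v{a, c}, whereas for \<upsilon>_\<epsilon> these sides are 3/2 + 2\<epsilon> and 3/2. *)

lemma prob_measure_pt_measure:
  assumes "\<And>x. 0 \<le> p x" and "sum p UNIV = 1"
  shows "prob_measure (pt_measure p)"
proof -
  have "0 \<le> sum p X" for X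
    using assms(1) by (simp add: sum_nonneg)
  moreover have "sum p X \<le> 1" for X
    using assms sum_mono2[of UNIV X p] by simp
  moreover have "sum p (A \<union> B) = sum p A + sum p B" if "A \<inter> B = {}" for A B
    using that by (simp add: sum.union_disjoint)
  ultimately show ?thesis
    using assms(2) unfolding prob_measure_def pt_measure_def by simp
qed

lemma prob_measure_compl:
  assumes "prob_measure \<mu>"
  shows "\<mu> (UNIV - B) = 1 - \<mu> B"
proof -
  have "\<mu> (B \<union> (UNIV - B)) = \<mu> B + \<mu> (UNIV - B)"
    using assms unfolding prob_measure_def by blast
  then show ?thesis
    using assms unfolding prob_measure_def by simp
qed

lemma property6_Max_prob_measures:
  assumes "finite P" and "P \<noteq> {}" and "\<forall>\<mu>\<in>P. prob_measure \<mu>"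
  shows "property6 (\<lambda>X. Max ((\<lambda>\<mu>. \<mu> X) ` P))"
  unfolding property6_def
proof (intro allI impI conjI)
  fix A B :: "omega set"
  assume disj: "A \<inter> B = {}"
  let ?E = "\<lambda>X. Max ((\<lambda>\<mu>. \<mu> X) ` P)"
  have le_E: "\<mu> X \<le> ?E X" if "\<mu> \<in> P" for \<mu> X
    using assms(1) that by simp
  have additive: "\<mu> (A \<union> B) = \<mu> A + \<mu> B" if "\<mu> \<in> P" for \<mu>
    using assms(3) that disj unfolding prob_measure_def by blast
  have "?E A \<in> (\<lambda>\<mu>. \<mu> A) ` P"
    using assms(1,2) by (intro Max_in) auto
  then obtain \<mu> where "\<mu> \<in> P" and \<mu>_max: "?E A = \<mu> A"
    by auto
  have "?E A + (1 - ?E (UNIV - B)) \<le> \<mu> A + \<mu> B"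
    using \<mu>_max le_E[OF \<open>\<mu> \<in> P\<close>, of "UNIV - B"] prob_measure_compl[of \<mu> B]
      assms(3) \<open>\<mu> \<in> P\<close> by simp
  also have "\<dots> \<le> ?E (A \<union> B)"
    using le_E[OF \<open>\<mu> \<in> P\<close>, of "A \<union> B"] additive[OF \<open>\<mu> \<in> P\<close>] by simp
  finally show "?E A + (1 - ?E (UNIV - B)) \<le> ?E (A \<union> B)" .
  have "\<nu> (A \<union> B) \<le> ?E A + ?E B" if "\<nu> \<in> P" for \<nu>
    using additive[OF that] le_E[OF that, of A] le_E[OF that, of B] by simp
  then show "?E (A \<union> B) \<le> ?E A + ?E B"
    using assms(1,2) by simp
qed

lemma property6D:
  assumes "property6 v" and "A \<inter> B = {}"
  shows "v A + (1 - v (UNIV - B)) \<le> v (A \<union> B)" and "v (A \<union> B) \<le> v A + v B"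
  using assms(1)[unfolded property6_def, rule_format, OF assms(2)] by simp_all

lemma property6_raise_coatom:
  assumes "property6 v" and "UNIV - S = {x}" and "0 \<le> \<epsilon>"
    and slack: "\<And>A B. A \<inter> B = {} \<Longrightarrow> A \<union> B = S \<Longrightarrow> A \<noteq> {} \<Longrightarrow> B \<noteq> {} \<Longrightarrow>
      v S + \<epsilon> \<le> v A + v B"
  shows "property6 (\<lambda>X. if X = S then v X + \<epsilon> else v X)"
  unfolding property6_def
proof (intro allI impI conjI)
  fix A B :: "omega set"
  assume disj: "A \<inter> B = {}"
  let ?w = "\<lambda>X. if X = S then v X + \<epsilon> else v X"
  have v_le_w: "v X \<le> ?w X" for X
    using assms(3) by simp
  note v6 = property6D[OF assms(1) disj]
  show "?w A + (1 - ?w (UNIV - B)) \<le> ?w (A \<union> B)"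
  proof (cases "A = S")
    case True
    with disj have "B \<subseteq> UNIV - S"
      by blast
    then have "B = {} \<or> B = {x}"
      unfolding assms(2) by (rule subset_singletonD)
    then show ?thesis
    proof
      assume "B = {}"
      then show ?thesis using True v6(1) v_le_w[of "UNIV - B"] by simp
    next
      assume "B = {x}"
      then have "UNIV - B = S" using assms(2) by blast
      then show ?thesis using True v6(1) v_le_w[of "A \<union> B"] by simp
    qed
  next
    case False
    then show ?thesis using v6(1) v_le_w[of "UNIV - B"] v_le_w[of "A \<union> B"] by simp
  qed
  have "0 \<le> v {}"
    using property6D(2)[OF assms(1), of "{}" "{}"] by simp
  then have w_empty: "0 \<le> ?w {}"
    using v_le_w[of "{}"] by simp
  show "?w (A \<union> B) \<le> ?w A + ?w B"
  proof (cases "A \<union> B = S")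
    case True
    consider "A = {}" | "B = {}" | "A \<noteq> {}" "B \<noteq> {}" by blast
    then show ?thesis
    proof cases
      case 1
      then show ?thesis using w_empty by (simp split: if_split_asm)
    next
      case 2
      then show ?thesis using w_empty by (simp split: if_split_asm)
    next
      case 3
      then show ?thesis
        using True slack[OF disj True] v_le_w[of A] v_le_w[of B] by simp
    qed
  next
    case False
    then show ?thesis using v6(2) v_le_w[of A] v_le_w[of B] by simp
  qed
qed

lemma prob_measure_triple:
  assumes "prob_measure \<mu>" and "x \<noteq> y" "y \<noteq> z" "x \<noteq> z"
  shows "2 * \<mu> {x, y, z} = \<mu> {x, y} + \<mu> {y, z} + \<mu> {x, z}"
proof -
  have additive: "\<mu> (A \<union> B) = \<mu> A + \<mu> B" if "A \<inter> B = {}" for A B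
    using assms(1) that unfolding prob_measure_def by blast
  have "\<mu> {x, y, z} = \<mu> {x} + \<mu> {y, z}"
    using additive[of "{x}" "{y, z}"] assms by (simp add: insert_commute)
  moreover have "\<mu> {y, z} = \<mu> {y} + \<mu> {z}"
    using additive[of "{y}" "{z}"] assms by (simp add: insert_commute)
  moreover have "\<mu> {x, y} = \<mu> {x} + \<mu> {y}"
    using additive[of "{x}" "{y}"] assms by (simp add: insert_commute)
  moreover have "\<mu> {x, z} = \<mu> {x} + \<mu> {z}"
    using additive[of "{x}" "{z}"] assms by (simp add: insert_commute)
  ultimately show ?thesis by simp
qed

lemma Sup_prob_measures_triple:
  assumes "\<forall>\<mu>\<in>P. prob_measure \<mu>" and "P \<noteq> {}" and "x \<noteq> y" "y \<noteq> z" "x \<noteq> z"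
  shows "2 * Sup ((\<lambda>\<mu>. \<mu> {x, y, z}) ` P) \<le>
    Sup ((\<lambda>\<mu>. \<mu> {x, y}) ` P) + Sup ((\<lambda>\<mu>. \<mu> {y, z}) ` P) + Sup ((\<lambda>\<mu>. \<mu> {x, z}) ` P)"
    (is "2 * ?S {x, y, z} \<le> ?S {x, y} + ?S {y, z} + ?S {x, z}")
proof -
  have le_S: "\<mu> X \<le> ?S X" if "\<mu> \<in> P" for \<mu> X
  proof (rule cSup_upper)
    show "bdd_above ((\<lambda>\<mu>. \<mu> X) ` P)"
      using assms(1) unfolding prob_measure_def by (intro bdd_aboveI[of _ 1]) auto
  qed (use that in simp)
  have "\<mu> {x, y, z} \<le> (?S {x, y} + ?S {y, z} + ?S {x, z}) / 2" if "\<mu> \<in> P" for \<mu>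
    using prob_measure_triple[of \<mu> x y z] assms that
      le_S[OF that, of "{x, y}"] le_S[OF that, of "{y, z}"] le_S[OF that, of "{x, z}"] by simp
  then have "?S {x, y, z} \<le> (?S {x, y} + ?S {y, z} + ?S {x, z}) / 2"
    using assms(2) by (intro cSup_least) auto
  then show ?thesis by simp
qed

lemma Pcal_prob_measures: "\<forall>\<mu>\<in>Pcal. prob_measure \<mu>"
  unfolding Pcal_def mu1_def mu2_def mu3_def mu4_def
  by (auto intro!: prob_measure_pt_measure
      simp: UNIV_omega p1_def p2_def p3_def p4_def split: omega.split)

lemma Pstar_eq: "Pstar X = max (mu1 X) (max (mu2 X) (max (mu3 X) (mu4 X)))"
  unfolding Pstar_def Pcal_def by simp

lemmas Pstar_unfold = Pstar_eq mu1_def mu2_def mu3_def mu4_def pt_measure_def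
  p1_def p2_def p3_def p4_def

lemma Pstar_split_abc:
  assumes "A \<inter> B = {}" and "A \<union> B = {a, b, c}" and "A \<noteq> {}" and "B \<noteq> {}"
  shows "7/8 \<le> Pstar A + Pstar B"
proof -
  have "A \<in> Pow {a, b, c}" and B: "B = {a, b, c} - A"
    using assms(1,2) by blast+
  then have "A = {a, b, c} \<or> A = {a, b} \<or> A = {a, c} \<or> A = {a} \<or> A = {b, c} \<or> A = {b} \<or>
      A = {c} \<or> A = {}"
    by (simp add: Pow_insert)
  then show ?thesis
    using assms(3,4) unfolding B by (elim disjE) (simp_all add: Pstar_unfold insert_Diff_if)
qed

lemma Pstar_abc: "Pstar {a, b, c} = 3/4"
  by (simp add: Pstar_unfold)

lemma upsilon_values:
  "upsilon \<epsilon> {} = 0" "upsilon \<epsilon> {a, b, c} = 3/4 + \<epsilon>"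
  "upsilon \<epsilon> {a, b} = 1/2" "upsilon \<epsilon> {b, c} = 1/2" "upsilon \<epsilon> {a, c} = 1/2"
  by (auto simp: upsilon_def Pstar_unfold)

theorem proposition2:
  fixes \<epsilon> :: real
  assumes "0 < \<epsilon>" and "\<epsilon> < 1/8"
  shows "property6 (upsilon \<epsilon>) \<and>
         \<not> (\<exists>P' :: (omega set \<Rightarrow> real) set.
               (\<forall>\<mu>\<in>P'. prob_measure \<mu>) \<and>
               (\<forall>X. upsilon \<epsilon> X = Sup ((\<lambda>\<mu>. \<mu> X) ` P')))"
proof
  have "property6 Pstar"
    using property6_Max_prob_measures[OF _ _ Pcal_prob_measures]
    unfolding Pstar_def[abs_def] Pcal_def by simp
  moreover have "Pstar {a, b, c} + \<epsilon> \<le> Pstar A + Pstar B"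
    if "A \<inter> B = {}" "A \<union> B = {a, b, c}" "A \<noteq> {}" "B \<noteq> {}" for A B
    using Pstar_split_abc[OF that] Pstar_abc assms(2) by simp
  moreover have "UNIV - {a, b, c} = {d}"
    using UNIV_omega by auto
  ultimately show "property6 (upsilon \<epsilon>)"
    using property6_raise_coatom[of Pstar "{a, b, c}" d \<epsilon>] assms(1)
    unfolding upsilon_def[abs_def] by simp
  show "\<not> (\<exists>P'. (\<forall>\<mu>\<in>P'. prob_measure \<mu>) \<and> (\<forall>X. upsilon \<epsilon> X = Sup ((\<lambda>\<mu>. \<mu> X) ` P')))"
  proof
    assume "\<exists>P'. (\<forall>\<mu>\<in>P'. prob_measure \<mu>) \<and> (\<forall>X. upsilon \<epsilon> X = Sup ((\<lambda>\<mu>. \<mu> X) ` P'))"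
    then obtain P' where prob: "\<forall>\<mu>\<in>P'. prob_measure \<mu>"
      and envelope: "\<And>X. upsilon \<epsilon> X = Sup ((\<lambda>\<mu>. \<mu> X) ` P')" by blast
    \<comment> \<open>\<open>Sup {}\<close> is a junk value, but the same one for \<open>{}\<close> and \<open>{a, b, c}\<close>\<close>
    have "P' \<noteq> {}"
      using envelope[of "{}"] envelope[of "{a, b, c}"] upsilon_values(1,2) assms(1) by auto
    from Sup_prob_measures_triple[OF prob this, of a b c]
    show False
      using assms(1) by (simp flip: envelope add: upsilon_values)
  qed
qed

end
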